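(* For fixed $t\in(0,1]$, the function $p\mapsto \pi(p,t)$ is continuous on $[0,t]$.
   Context: For $p\in[0,1]$ let $\beta_1^p,\beta_2^p,\ldots$ be independent Bernoulli random variables with success probability $p$. A stake sequence is a sequence $\gamma=(c_1,c_2,\ldots)$ of non-negative reals with $c_1\ge c_2\ge\cdots$ and $\sum_i c_i=1$; write $S^p_\gamma=\sum_i c_i\beta^p_i$. For $0\le p\le t\le 1$ define $\pi(p,t)=\sup\{\mathbf P(S^p_\gamma\ge t)\mid \gamma \text{ a stake sequence}\}$. *)

theory Defs
  imports "HOL-Probability.Probability"
begin

text \<open>Infinite sequence of independent Bernoulli(p) variables, realised as the
  coordinates of the infinite product probability space on nat => bool.\<close>
definition bern_space :: "real \<Rightarrow> (nat \<Rightarrow> bool) measure" where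
  "bern_space p = PiM UNIV (\<lambda>_. measure_pmf (bernoulli_pmf p))"

definition stake_seq :: "(nat \<Rightarrow> real) \<Rightarrow> bool" where
  "stake_seq c \<longleftrightarrow> (\<forall>i. 0 \<le> c i) \<and> decseq c \<and> c sums 1"

definition stake_sum :: "(nat \<Rightarrow> real) \<Rightarrow> (nat \<Rightarrow> bool) \<Rightarrow> real" where
  "stake_sum c \<omega> = (\<Sum>i. c i * (if \<omega> i then 1 else 0))"

definition pi_fun :: "real \<Rightarrow> real \<Rightarrow> real" where
  "pi_fun p t = Sup {measure (bern_space p) {\<omega> \<in> space (bern_space p). stake_sum c \<omega> \<ge> t}
                     | c. stake_seq c}"

end

theory Submission
  imports Defs
begin

text \<open>The supremum defining \<open>pi_fun\<close> may be restricted to finitely supported stake sequences,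
  for which \<open>P(S \<ge> t)\<close> is a polynomial in \<open>p\<close>.  This restricted supremum \<open>pi_fin\<close> is therefore
  lower semicontinuous, and it equals \<open>pi_fun\<close>: truncating an infinite stake sequence and
  renormalising its head changes the threshold only within a window of small width, and such a
  window has small probability because stakes tending to \<open>0\<close> contain many indices whose subset
  sums are pairwise well separated.

  Upper semicontinuity at \<open>p < t\<close> is a compactness argument.  Near-optimal finite stake sequences
  for \<open>q\<^sub>k \<longrightarrow> p\<close> have a pointwise convergent subsequence with limit \<open>c\<close>.  Split the sums
  at \<open>N\<close>: by Chebyshev's inequality the tail, of mass \<open>m\<close>, contributes about \<open>q\<^sub>k m\<close>, so the
  head must exceed \<open>t - p m\<close>, whereas renormalising the head of \<open>c\<close> only compares it with the
  threshold \<open>t (1 - m)\<close>.  The slack \<open>(t - p) m\<close> lets the head be bounded by \<open>pi_fin p t\<close>.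
  At \<open>p = t\<close> monotonicity in \<open>p\<close> suffices.\<close>

section \<open>Finite Bernoulli expectations\<close>

definition bern_weight :: "real \<Rightarrow> nat set \<Rightarrow> nat set \<Rightarrow> real" where
  "bern_weight p A B = (\<Prod>i\<in>A. if i \<in> B then p else 1 - p)"

text \<open>For finite \<open>A\<close>, \<open>stake_expect p c A g\<close> is the expectation of
  \<open>g (\<Sum>i\<in>A. c i * \<beta>\<^sup>p\<^sub>i)\<close>, summing over the set \<open>B\<close> of successes.\<close>
definition stake_expect :: "real \<Rightarrow> (nat \<Rightarrow> real) \<Rightarrow> nat set \<Rightarrow> (real \<Rightarrow> real) \<Rightarrow> real" where
  "stake_expect p c A g = (\<Sum>B\<in>Pow A. bern_weight p A B * g (sum c B))"

definition at_least :: "real \<Rightarrow> real \<Rightarrow> real" where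
  "at_least s y = of_bool (s \<le> y)"

lemma at_least_nonneg: "0 \<le> at_least s y"
  and at_least_le_1: "at_least s y \<le> 1"
  and at_least_antimono: "s' \<le> s \<Longrightarrow> at_least s y \<le> at_least s' y"
  by (auto simp: at_least_def)

lemma bern_weight_nonneg: "0 \<le> p \<Longrightarrow> p \<le> 1 \<Longrightarrow> 0 \<le> bern_weight p A B"
  by (auto simp: bern_weight_def intro!: prod_nonneg)

lemma bern_weight_le_power:
  assumes "0 \<le> p" "p \<le> 1"
  shows "bern_weight p A B \<le> max p (1 - p) ^ card A"
proof -
  have "bern_weight p A B \<le> (\<Prod>i\<in>A. max p (1 - p))"
    unfolding bern_weight_def using assms by (intro prod_mono) auto
  then show ?thesis by simp
qed

lemma bern_weight_union:
  assumes "finite A1" "finite A2" "A1 \<inter> A2 = {}"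
  shows "bern_weight p (A1 \<union> A2) B = bern_weight p A1 (B \<inter> A1) * bern_weight p A2 (B \<inter> A2)"
  unfolding bern_weight_def using assms
  by (subst prod.union_disjoint) (auto intro!: arg_cong2[where f="(*)"] prod.cong)

lemma stake_expect_union:
  assumes "finite A1" "finite A2" "A1 \<inter> A2 = {}"
  shows "stake_expect p c (A1 \<union> A2) g =
    (\<Sum>B1\<in>Pow A1. \<Sum>B2\<in>Pow A2. bern_weight p A1 B1 * bern_weight p A2 B2 * g (sum c B1 + sum c B2))"
proof -
  have "(\<Sum>B1\<in>Pow A1. \<Sum>B2\<in>Pow A2. bern_weight p A1 B1 * bern_weight p A2 B2 * g (sum c B1 + sum c B2))
     = (\<Sum>(B1, B2)\<in>Pow A1 \<times> Pow A2. bern_weight p A1 B1 * bern_weight p A2 B2 * g (sum c B1 + sum c B2))"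
    by (rule sum.cartesian_product)
  also have "\<dots> = stake_expect p c (A1 \<union> A2) g"
    unfolding stake_expect_def
  proof (rule sum.reindex_bij_witness[where j="\<lambda>(B1, B2). B1 \<union> B2" and i="\<lambda>B. (B \<inter> A1, B \<inter> A2)"])
    fix a assume "a \<in> Pow A1 \<times> Pow A2"
    then obtain B1 B2 where B: "a = (B1, B2)" "B1 \<subseteq> A1" "B2 \<subseteq> A2" by auto
    have "finite B1" "finite B2" using B assms by (auto intro: finite_subset)
    then have "sum c (B1 \<union> B2) = sum c B1 + sum c B2"
      using B assms by (intro sum.union_disjoint) auto
    moreover have "(B1 \<union> B2) \<inter> A1 = B1" "(B1 \<union> B2) \<inter> A2 = B2" using B assms by auto
    ultimately show "bern_weight p (A1 \<union> A2) (case a of (B1, B2) \<Rightarrow> B1 \<union> B2)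
        * g (sum c (case a of (B1, B2) \<Rightarrow> B1 \<union> B2))
      = (case a of (B1, B2) \<Rightarrow> bern_weight p A1 B1 * bern_weight p A2 B2 * g (sum c B1 + sum c B2))"
      using bern_weight_union[OF assms, of p "B1 \<union> B2"] B by simp
  qed (use assms in auto)
  finally show ?thesis by simp
qed

lemma stake_expect_empty [simp]: "stake_expect p c {} g = g 0"
  by (simp add: stake_expect_def bern_weight_def)

lemma stake_expect_insert:
  assumes "finite A" "a \<notin> A"
  shows "stake_expect p c (insert a A) g
    = p * stake_expect p c A (\<lambda>y. g (y + c a)) + (1 - p) * stake_expect p c A g"
proof -
  have pow: "Pow {a} = {{}, {a}}" by auto
  have "stake_expect p c (A \<union> {a}) g = (\<Sum>B\<in>Pow A.
      p * (bern_weight p A B * g (sum c B + c a)) + (1 - p) * (bern_weight p A B * g (sum c B)))"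
    unfolding stake_expect_union[OF assms(1) finite.intros(1)[THEN finite_insert[THEN iffD2]]
        disjoint_insert(1)[THEN iffD2, OF conjI[OF assms(2) Int_empty_right]]]
    by (intro sum.cong refl) (simp add: pow bern_weight_def algebra_simps)
  then show ?thesis
    by (simp add: stake_expect_def sum.distrib sum_distrib_left)
qed

lemma stake_expect_mono:
  assumes "0 \<le> p" "p \<le> 1" "\<And>y. g y \<le> h y"
  shows "stake_expect p c A g \<le> stake_expect p c A h"
  unfolding stake_expect_def using assms bern_weight_nonneg[OF assms(1,2)]
  by (intro sum_mono mult_left_mono) auto

lemma stake_expect_nonneg:
  assumes "0 \<le> p" "p \<le> 1" "\<And>y. 0 \<le> g y"
  shows "0 \<le> stake_expect p c A g"
  unfolding stake_expect_def using assms bern_weight_nonneg[OF assms(1,2)]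
  by (intro sum_nonneg mult_nonneg_nonneg) auto

lemma stake_expect_add: "stake_expect p c A (\<lambda>y. g y + h y) = stake_expect p c A g + stake_expect p c A h"
  by (simp add: stake_expect_def sum.distrib algebra_simps)

lemma stake_expect_cmult: "stake_expect p c A (\<lambda>y. k * g y) = k * stake_expect p c A g"
  by (simp add: stake_expect_def sum_distrib_left algebra_simps)

lemma stake_expect_const: "finite A \<Longrightarrow> stake_expect p c A (\<lambda>_. k) = k"
  by (induction A rule: finite_induct) (simp_all add: stake_expect_insert algebra_simps)

lemma sum_bern_weight: "finite A \<Longrightarrow> (\<Sum>B\<in>Pow A. bern_weight p A B) = 1"
  using stake_expect_const[of A p c 1] by (simp add: stake_expect_def)

lemma stake_expect_null:
  assumes "finite A" "\<And>i. i \<in> A \<Longrightarrow> c i = 0"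
  shows "stake_expect p c A g = g 0"
proof -
  have "sum c B = 0" if "B \<in> Pow A" for B
    using that assms(2) by (auto intro!: sum.neutral)
  then have "stake_expect p c A g = (\<Sum>B\<in>Pow A. bern_weight p A B) * g 0"
    unfolding stake_expect_def sum_distrib_right by (intro sum.cong) auto
  then show ?thesis using assms(1) by (simp add: sum_bern_weight)
qed

lemma stake_expect_le_1:
  assumes "finite A" "0 \<le> p" "p \<le> 1" "\<And>y. g y \<le> 1"
  shows "stake_expect p c A g \<le> 1"
  using stake_expect_mono[OF assms(2,3), of g "\<lambda>_. 1" c A] assms(4) stake_expect_const[OF assms(1)]
  by simp

lemma stake_expect_zero_prob: "finite A \<Longrightarrow> stake_expect 0 c A g = g 0"
  by (induction A arbitrary: g rule: finite_induct) (simp_all add: stake_expect_insert)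

lemma stake_expect_square:
  assumes "finite A"
  shows "stake_expect p c A (\<lambda>y. (y + d)\<^sup>2) = (d + p * sum c A)\<^sup>2 + p * (1 - p) * (\<Sum>i\<in>A. (c i)\<^sup>2)"
  using assms
proof (induction A arbitrary: d rule: finite_induct)
  case (insert a A)
  have "stake_expect p c (insert a A) (\<lambda>y. (y + d)\<^sup>2)
      = p * stake_expect p c A (\<lambda>y. (y + (c a + d))\<^sup>2) + (1 - p) * stake_expect p c A (\<lambda>y. (y + d)\<^sup>2)"
    using stake_expect_insert[OF insert.hyps] by (simp add: algebra_simps)
  also have "\<dots> = p * ((c a + d + p * sum c A)\<^sup>2 + p * (1 - p) * (\<Sum>i\<in>A. (c i)\<^sup>2))
      + (1 - p) * ((d + p * sum c A)\<^sup>2 + p * (1 - p) * (\<Sum>i\<in>A. (c i)\<^sup>2))"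
    using insert.IH by simp
  also have "\<dots> = (d + p * sum c (insert a A))\<^sup>2 + p * (1 - p) * (\<Sum>i\<in>insert a A. (c i)\<^sup>2)"
    using insert.hyps by (simp add: power2_eq_square algebra_simps)
  finally show ?case .
qed simp

lemma stake_expect_mono_prob:
  assumes "finite A" "0 \<le> p" "p \<le> q" "q \<le> 1" "\<And>i. i \<in> A \<Longrightarrow> 0 \<le> c i" "mono g"
  shows "stake_expect p c A g \<le> stake_expect q c A g"
  using assms(1,5,6)
proof (induction A arbitrary: g rule: finite_induct)
  case (insert a A)
  let ?ga = "\<lambda>y. g (y + c a)"
  have "mono ?ga" using insert.prems(2) by (simp add: mono_def)
  then have ga: "stake_expect p c A ?ga \<le> stake_expect q c A ?ga"
    using insert by simp
  have g: "stake_expect p c A g \<le> stake_expect q c A g"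
    using insert by simp
  have "stake_expect q c A g \<le> stake_expect q c A ?ga"
    using assms(2-4) insert.prems by (intro stake_expect_mono) (auto simp: mono_def)
  then have "0 \<le> (q - p) * (stake_expect q c A ?ga - stake_expect q c A g)"
    using assms(3) by simp
  then have "p * stake_expect q c A ?ga + (1 - p) * stake_expect q c A g
      \<le> q * stake_expect q c A ?ga + (1 - q) * stake_expect q c A g"
    by (simp add: algebra_simps)
  moreover have "p * stake_expect p c A ?ga + (1 - p) * stake_expect p c A g
      \<le> p * stake_expect q c A ?ga + (1 - p) * stake_expect q c A g"
    using assms(2-4) ga g by (intro add_mono mult_left_mono) auto
  ultimately show ?case
    using insert.hyps by (simp add: stake_expect_insert)
qed simp

lemma isCont_stake_expect: "isCont (\<lambda>p. stake_expect p c A g) x"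
proof -
  have "isCont (\<lambda>p. if i \<in> B then p else 1 - p) x" for i B
    by (cases "i \<in> B") (auto intro!: continuous_intros)
  then show ?thesis
    unfolding stake_expect_def bern_weight_def by (intro continuous_intros)
qed

lemma stake_expect_union_le:
  assumes "finite A1" "finite A2" "A1 \<inter> A2 = {}" "0 \<le> p" "p \<le> 1"
    "\<And>a b. g (a + b) \<le> g1 a + g2 b"
  shows "stake_expect p c (A1 \<union> A2) g \<le> stake_expect p c A1 g1 + stake_expect p c A2 g2"
proof -
  have "stake_expect p c (A1 \<union> A2) g \<le> (\<Sum>B1\<in>Pow A1. \<Sum>B2\<in>Pow A2.
      bern_weight p A1 B1 * bern_weight p A2 B2 * (g1 (sum c B1) + g2 (sum c B2)))"
    unfolding stake_expect_union[OF assms(1-3)] using bern_weight_nonneg[OF assms(4,5)] assms(6)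
    by (intro sum_mono mult_left_mono) auto
  also have "\<dots> = (\<Sum>B1\<in>Pow A1. bern_weight p A1 B1 * g1 (sum c B1) * (\<Sum>B2\<in>Pow A2. bern_weight p A2 B2))
     + (\<Sum>B1\<in>Pow A1. bern_weight p A1 B1) * (\<Sum>B2\<in>Pow A2. bern_weight p A2 B2 * g2 (sum c B2))"
    by (simp add: sum.distrib sum_distrib_left sum_distrib_right algebra_simps) (rule sum.swap)
  also have "\<dots> = stake_expect p c A1 g1 + stake_expect p c A2 g2"
    using assms(1,2) by (simp add: sum_bern_weight stake_expect_def)
  finally show ?thesis .
qed

lemma stake_expect_union_null:
  assumes "finite A" "finite Z" "A \<inter> Z = {}" "\<And>i. i \<in> Z \<Longrightarrow> c i = 0"
  shows "stake_expect p c (A \<union> Z) g = stake_expect p c A g"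
proof -
  have "sum c B = 0" if "B \<in> Pow Z" for B
    using that assms(4) by (auto intro!: sum.neutral)
  then have "stake_expect p c (A \<union> Z) g
      = (\<Sum>B1\<in>Pow A. bern_weight p A B1 * g (sum c B1) * (\<Sum>B2\<in>Pow Z. bern_weight p Z B2))"
    unfolding stake_expect_union[OF assms(1-3)] by (simp add: sum_distrib_left algebra_simps)
  then show ?thesis
    using assms(2) by (simp add: sum_bern_weight stake_expect_def)
qed

lemma stake_expect_at_least_limsup:
  assumes "finite A" "q \<longlonglongrightarrow> p" "\<And>k. 0 \<le> q k" "\<And>k. q k \<le> 1"
    and "\<And>i. (\<lambda>k. cs k i) \<longlonglongrightarrow> c i" "s \<longlonglongrightarrow> s0" "0 < \<eta>" "0 < \<epsilon>"
  shows "\<forall>\<^sub>F k in sequentially.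
    stake_expect (q k) (cs k) A (at_least (s k)) \<le> stake_expect p c A (at_least (s0 - \<eta>)) + \<epsilon>"
proof -
  have "\<forall>\<^sub>F k in sequentially. \<forall>B\<in>Pow A. at_least (s k) (sum (cs k) B) \<le> at_least (s0 - \<eta>) (sum c B)"
  proof (rule eventually_ball_finite, use assms(1) in simp, rule ballI)
    fix B
    show "\<forall>\<^sub>F k in sequentially. at_least (s k) (sum (cs k) B) \<le> at_least (s0 - \<eta>) (sum c B)"
    proof (cases "s0 - \<eta> \<le> sum c B")
      case False
      have "(\<lambda>k. sum (cs k) B - s k) \<longlonglongrightarrow> sum c B - s0"
        using assms(5,6) by (intro tendsto_intros)
      moreover have "sum c B - s0 < 0" using False assms(7) by simp
      ultimately have "\<forall>\<^sub>F k in sequentially. sum (cs k) B - s k < 0"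
        by (rule order_tendstoD)
      then show ?thesis by eventually_elim (simp add: at_least_def)
    qed (simp add: at_least_def)
  qed
  moreover have "(\<lambda>k. stake_expect (q k) c A (at_least (s0 - \<eta>))) \<longlonglongrightarrow> stake_expect p c A (at_least (s0 - \<eta>))"
    using isCont_tendsto_compose[OF isCont_stake_expect assms(2)] .
  then have "\<forall>\<^sub>F k in sequentially. stake_expect (q k) c A (at_least (s0 - \<eta>)) < stake_expect p c A (at_least (s0 - \<eta>)) + \<epsilon>"
    using assms(8) by (intro order_tendstoD) auto
  ultimately show ?thesis
  proof eventually_elim
    case (elim k)
    have "stake_expect (q k) (cs k) A (at_least (s k)) \<le> stake_expect (q k) c A (at_least (s0 - \<eta>))"
      unfolding stake_expect_def using elim(1) bern_weight_nonneg assms(3,4)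
      by (intro sum_mono mult_left_mono) auto
    then show ?case using elim(2) by simp
  qed
qed

lemma stake_expect_at_least_left:
  assumes "finite A"
  shows "\<forall>\<^sub>F s in at_left t. stake_expect p c A (at_least s) = stake_expect p c A (at_least t)"
proof -
  have "\<forall>\<^sub>F s in at_left t. \<forall>B\<in>Pow A. at_least s (sum c B) = at_least t (sum c B)"
  proof (rule eventually_ball_finite, use assms in simp, rule ballI)
    fix B
    show "\<forall>\<^sub>F s in at_left t. at_least s (sum c B) = at_least t (sum c B)"
    proof (cases "t \<le> sum c B")
      case True
      have "\<forall>\<^sub>F s in at_left t. s < t" by (simp add: eventually_at_filter)
      then show ?thesis by eventually_elim (use True in \<open>simp add: at_least_def\<close>)
    next
      case False
      then have "\<forall>\<^sub>F s in at_left t. s \<in> {sum c B<..<t}"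
        by (intro eventually_at_left_real) simp
      then show ?thesis by eventually_elim (use False in \<open>simp add: at_least_def\<close>)
    qed
  qed
  then show ?thesis
    by eventually_elim (simp add: stake_expect_def)
qed

section \<open>Anti-concentration\<close>

definition sums_separated :: "(nat \<Rightarrow> real) \<Rightarrow> nat set \<Rightarrow> real \<Rightarrow> bool" where
  "sums_separated c F L \<longleftrightarrow> (\<forall>B1 \<subseteq> F. \<forall>B2 \<subseteq> F. B1 \<noteq> B2 \<longrightarrow> L \<le> \<bar>sum c B1 - sum c B2\<bar>)"

lemma sums_separatedD:
  "sums_separated c F L \<Longrightarrow> B1 \<subseteq> F \<Longrightarrow> B2 \<subseteq> F \<Longrightarrow> B1 \<noteq> B2 \<Longrightarrow> L \<le> \<bar>sum c B1 - sum c B2\<bar>"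
  by (simp add: sums_separated_def)

lemma sums_separated_insert:
  assumes "finite F" "sums_separated c F L" "j \<notin> F" "0 < c j" "2 * c j \<le> L"
  shows "sums_separated c (insert j F) (c j)"
  unfolding sums_separated_def
proof (intro allI impI)
  fix B1 B2 assume B: "B1 \<subseteq> insert j F" "B2 \<subseteq> insert j F" "B1 \<noteq> B2"
  have split: "sum c B = sum c (B - {j}) + (if j \<in> B then c j else 0)" if "B \<subseteq> insert j F" for B
    using that assms(1) finite_subset[of B "insert j F"] by (simp add: sum_diff1)
  show "c j \<le> \<bar>sum c B1 - sum c B2\<bar>"
  proof (cases "B1 - {j} = B2 - {j}")
    case True
    then have "j \<in> B1 \<longleftrightarrow> j \<notin> B2" using B(3) by blast
    then show ?thesis using split[OF B(1)] split[OF B(2)] True assms(4) by auto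
  next
    case False
    define e where "e = (if j \<in> B1 then c j else 0) - (if j \<in> B2 then c j else 0)"
    have "B1 - {j} \<subseteq> F" "B2 - {j} \<subseteq> F" using B(1,2) by auto
    then have "L \<le> \<bar>sum c (B1 - {j}) - sum c (B2 - {j})\<bar>"
      using False assms(2) by (intro sums_separatedD)
    moreover have "\<bar>e\<bar> \<le> c j" using assms(4) by (auto simp: e_def)
    moreover have "sum c (B1 - {j}) - sum c (B2 - {j}) = (sum c B1 - sum c B2) - e"
      using split[OF B(1)] split[OF B(2)] by (simp add: e_def)
    ultimately show ?thesis
      using abs_triangle_ineq4[of "sum c B1 - sum c B2" e] assms(5) by linarith
  qed
qed

lemma sums_separated_exists:
  assumes "\<And>i. 0 < c i" "c \<longlonglongrightarrow> 0"
  shows "\<exists>F L. finite F \<and> card F = n \<and> 0 < L \<and> sums_separated c F L"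
proof (induction n)
  case 0
  show ?case by (rule exI[of _ "{}"], rule exI[of _ 1]) (auto simp: sums_separated_def)
next
  case (Suc n)
  then obtain F L where FL: "finite F" "card F = n" "0 < L" "sums_separated c F L" by blast
  obtain m where m: "F \<subseteq> {..<m}" using FL(1) finite_nat_bounded by blast
  have "\<forall>\<^sub>F j in sequentially. c j < L / 2"
    using assms(2) FL(3) by (intro order_tendstoD) auto
  then have "\<forall>\<^sub>F j in sequentially. c j < L / 2 \<and> m \<le> j"
    using eventually_ge_at_top[of m] by eventually_elim auto
  then obtain j where j: "c j < L / 2" "m \<le> j" using eventually_sequentially by auto
  then have "j \<notin> F" using m by auto
  then show ?case
    using FL j assms(1)[of j] sums_separated_insert[OF FL(1) FL(4), of j]
    by (intro exI[of _ "insert j F"] exI[of _ "c j"]) auto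
qed

lemma sum_bern_weight_window_le:
  assumes "finite F" "sums_separated c F L" "w \<le> L" "0 \<le> p" "p \<le> 1"
  shows "(\<Sum>B\<in>Pow F. bern_weight p F B * of_bool (x \<le> sum c B \<and> sum c B < x + w))
    \<le> max p (1 - p) ^ card F"
proof -
  let ?W = "{B \<in> Pow F. x \<le> sum c B \<and> sum c B < x + w}"
  have "B = B'" if "B \<in> ?W" "B' \<in> ?W" for B B'
  proof (rule ccontr)
    assume "B \<noteq> B'"
    then have "L \<le> \<bar>sum c B - sum c B'\<bar>" using assms(2) that by (intro sums_separatedD) auto
    then show False using that assms(3) by auto
  qed
  then have "card ?W \<le> 1" using assms(1) by (simp add: card_le_Suc0_iff_eq)
  have "(\<Sum>B\<in>Pow F. bern_weight p F B * of_bool (x \<le> sum c B \<and> sum c B < x + w))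
      = (\<Sum>B\<in>Pow F. if x \<le> sum c B \<and> sum c B < x + w then bern_weight p F B else 0)"
    by (intro sum.cong) auto
  also have "\<dots> = (\<Sum>B\<in>?W. bern_weight p F B)"
    by (rule sum.inter_filter[symmetric]) (use assms(1) in simp)
  also have "\<dots> \<le> of_nat (card ?W) * max p (1 - p) ^ card F"
    using bern_weight_le_power[OF assms(4,5)] by (rule sum_bounded_above)
  also have "\<dots> \<le> max p (1 - p) ^ card F"
    using \<open>card ?W \<le> 1\<close> by (intro mult_left_le_one_le) auto
  finally show ?thesis .
qed

lemma stake_expect_window_le:
  assumes "finite A" "F \<subseteq> A" "sums_separated c F L" "w \<le> L" "0 \<le> p" "p \<le> 1"
  shows "stake_expect p c A (\<lambda>y. of_bool (x \<le> y \<and> y < x + w)) \<le> max p (1 - p) ^ card F"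
proof -
  have F: "finite F" using assms(1,2) by (rule finite_subset[rotated])
  have AF: "A = F \<union> (A - F)" using assms(2) by auto
  have "stake_expect p c A (\<lambda>y. of_bool (x \<le> y \<and> y < x + w))
      = (\<Sum>B1\<in>Pow F. \<Sum>B2\<in>Pow (A - F). bern_weight p F B1 * bern_weight p (A - F) B2
          * of_bool (x \<le> sum c B1 + sum c B2 \<and> sum c B1 + sum c B2 < x + w))"
    using stake_expect_union[OF F, of "A - F"] assms(1) AF by simp
  also have "\<dots> = (\<Sum>B2\<in>Pow (A - F). bern_weight p (A - F) B2 * (\<Sum>B1\<in>Pow F. bern_weight p F B1
          * of_bool (x - sum c B2 \<le> sum c B1 \<and> sum c B1 < x - sum c B2 + w)))"
    by (subst sum.swap) (auto simp: sum_distrib_left algebra_simps intro!: sum.cong)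
  also have "\<dots> \<le> (\<Sum>B2\<in>Pow (A - F). bern_weight p (A - F) B2 * max p (1 - p) ^ card F)"
    using sum_bern_weight_window_le[OF F assms(3,4,5,6)] bern_weight_nonneg[OF assms(5,6)]
    by (intro sum_mono mult_left_mono) auto
  also have "\<dots> = max p (1 - p) ^ card F"
    using assms(1) by (simp add: sum_distrib_right[symmetric] sum_bern_weight)
  finally show ?thesis .
qed

section \<open>Finitely supported stake sequences\<close>

definition pi_fin :: "real \<Rightarrow> real \<Rightarrow> real" where
  "pi_fin p t = Sup {stake_expect p c {..<n} (at_least t) | c n. stake_seq c \<and> (\<forall>i\<ge>n. c i = 0)}"

lemma stake_seq_unit: "stake_seq (\<lambda>i. of_bool (i = 0))"
proof -
  have "(\<lambda>i. of_bool (i = 0) :: real) sums 1"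
    using sums_single[of 0 "\<lambda>_. 1::real"] by (simp add: of_bool_def)
  then show ?thesis by (auto simp: stake_seq_def decseq_def)
qed

lemma stake_expect_unit: "stake_expect p (\<lambda>i. of_bool (i = 0)) {..<1} g = p * g 1 + (1 - p) * g 0"
proof -
  have "{..<1::nat} = insert 0 {}" by auto
  then show ?thesis by (simp add: stake_expect_insert)
qed

lemma stake_expect_le_pi_fin:
  assumes "0 \<le> p" "p \<le> 1" "stake_seq c" "\<forall>i\<ge>n. c i = 0"
  shows "stake_expect p c {..<n} (at_least t) \<le> pi_fin p t"
proof -
  let ?P = "{stake_expect p c {..<n} (at_least t) | c n. stake_seq c \<and> (\<forall>i\<ge>n. c i = 0)}"
  have "stake_expect p c {..<n} (at_least t) \<in> ?P" using assms(3,4) by blast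
  moreover have "bdd_above ?P"
    using assms(1,2) by (auto simp: bdd_above_def intro!: exI[of _ 1] stake_expect_le_1 at_least_le_1)
  ultimately show ?thesis unfolding pi_fin_def by (rule cSup_upper)
qed

lemma pi_fin_le:
  assumes "\<And>c n. stake_seq c \<Longrightarrow> \<forall>i\<ge>n. c i = 0 \<Longrightarrow> stake_expect p c {..<n} (at_least t) \<le> x"
  shows "pi_fin p t \<le> x"
proof -
  have "stake_expect p (\<lambda>i. of_bool (i = 0)) {..<1} (at_least t)
      \<in> {stake_expect p c {..<n} (at_least t) | c n. stake_seq c \<and> (\<forall>i\<ge>n. c i = 0)}"
    using stake_seq_unit by fastforce
  then show ?thesis
    unfolding pi_fin_def by (intro cSup_least) (auto intro: assms)
qed

lemma less_pi_fin_obtains: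
  assumes "a < pi_fin p t"
  obtains c n where "stake_seq c" "\<forall>i\<ge>n. c i = 0" "a < stake_expect p c {..<n} (at_least t)"
  using assms pi_fin_le[of p t a] by force

lemma pi_fin_nonneg: "0 \<le> p \<Longrightarrow> p \<le> 1 \<Longrightarrow> 0 \<le> pi_fin p t"
  using stake_expect_le_pi_fin[OF _ _ stake_seq_unit, of p 1 t]
    stake_expect_nonneg[of p "at_least t" "\<lambda>i. of_bool (i = 0)" "{..<1}"]
  by (simp add: at_least_nonneg)

lemma pi_fin_one: "t \<le> 1 \<Longrightarrow> 1 \<le> pi_fin 1 t"
  using stake_expect_le_pi_fin[OF _ _ stake_seq_unit, of 1 1 t] stake_expect_unit[of 1 "at_least t"]
  by (simp add: at_least_def)

lemma pi_fin_mono: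
  assumes "0 \<le> q" "q \<le> p" "p \<le> 1"
  shows "pi_fin q t \<le> pi_fin p t"
proof (rule pi_fin_le)
  fix c n assume c: "stake_seq c" "\<forall>i\<ge>n. c i = 0"
  have "stake_expect q c {..<n} (at_least t) \<le> stake_expect p c {..<n} (at_least t)"
    using assms c(1) by (intro stake_expect_mono_prob) (auto simp: stake_seq_def mono_def at_least_def)
  also have "\<dots> \<le> pi_fin p t"
    using assms c by (intro stake_expect_le_pi_fin) auto
  finally show "stake_expect q c {..<n} (at_least t) \<le> pi_fin p t" .
qed

text \<open>Dividing by the partial sum turns the head of \<open>c\<close> into a finitely supported stake
  sequence; left continuity of its distribution function provides the slack \<open>\<delta>\<close>.\<close>
lemma stake_expect_at_least_le_pi_fin:
  assumes "0 \<le> p" "p \<le> 1" "\<And>i. 0 \<le> c i" "decseq c" "0 < sum c {..<n}"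
  obtains \<delta> where "0 < \<delta>"
    "\<And>a. t * sum c {..<n} - \<delta> < a \<Longrightarrow> stake_expect p c {..<n} (at_least a) \<le> pi_fin p t"
proof -
  define S where "S = sum c {..<n}"
  define c' where "c' i = (if i < n then c i / S else 0)" for i
  have S: "0 < S" using assms(5) by (simp add: S_def)
  have "c' sums sum c' {..<n}" by (rule sums_finite) (auto simp: c'_def)
  moreover have "sum c' {..<n} = 1"
    using S by (simp add: c'_def sum_divide_distrib[symmetric] S_def)
  moreover have "decseq c'"
    using assms(3,4) S by (auto simp: decseq_def c'_def divide_right_mono)
  ultimately have c': "stake_seq c'" "\<forall>i\<ge>n. c' i = 0"
    using assms(3) S by (auto simp: stake_seq_def c'_def)
  have rescale: "stake_expect p c {..<n} (at_least a) = stake_expect p c' {..<n} (at_least (a / S))" for a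
    unfolding stake_expect_def
  proof (intro sum.cong refl arg_cong2[where f="(*)"])
    fix B assume "B \<in> Pow {..<n}"
    then have "sum c' B = sum c B / S" by (auto simp: c'_def sum_divide_distrib intro!: sum.cong)
    then show "at_least a (sum c B) = at_least (a / S) (sum c' B)"
      using S by (simp add: at_least_def divide_le_cancel)
  qed
  obtain b where "b < t" and b: "\<And>s. b < s \<Longrightarrow> s < t
      \<Longrightarrow> stake_expect p c' {..<n} (at_least s) = stake_expect p c' {..<n} (at_least t)"
    using stake_expect_at_least_left[where A="{..<n}" and p=p and c=c' and t=t]
      eventually_at_left[of "t - 1" t] by auto
  show thesis
  proof (rule that)
    show "0 < (t - b) * S" using \<open>b < t\<close> S by simp
    fix a assume "t * sum c {..<n} - (t - b) * S < a"
    then have "b < a / S" using S by (simp add: S_def[symmetric] field_simps)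
    then have "stake_expect p c' {..<n} (at_least (a / S)) \<le> stake_expect p c' {..<n} (at_least t)"
      using b[of "a / S"] assms(1,2) at_least_antimono[of t "a / S"]
      by (cases "a / S < t") (auto intro: stake_expect_mono)
    also have "\<dots> \<le> pi_fin p t" using assms(1,2) c' by (rule stake_expect_le_pi_fin)
    finally show "stake_expect p c {..<n} (at_least a) \<le> pi_fin p t" by (simp add: rescale)
  qed
qed

text \<open>Beyond the renormalised bound only a window of width at most \<open>L\<close> remains, and
  the \<open>k\<close> indices of a separated set make any such window carry probability at most
  \<open>max p (1 - p) ^ k\<close>.\<close>
lemma stake_expect_at_least_le_pi_fin_window:
  assumes "0 < p" "p < 1" "\<And>i. 0 < c i" "decseq c" "c \<longlonglongrightarrow> 0" "0 < \<epsilon>"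
  obtains L M where "0 < L" "\<And>N a. M \<le> N \<Longrightarrow> t * sum c {..<N} - L \<le> a
      \<Longrightarrow> stake_expect p c {..<N} (at_least a) \<le> pi_fin p t + \<epsilon>"
proof -
  define m where "m = max p (1 - p)"
  have "m < 1" using assms(1,2) by (simp add: m_def)
  then obtain k where k: "m ^ k < \<epsilon>" using real_arch_pow_inv[OF assms(6)] by blast
  obtain F L where FL: "finite F" "card F = k" "0 < L" "sums_separated c F L"
    using sums_separated_exists[OF assms(3,5)] by blast
  obtain M where M: "F \<subseteq> {..<M}" using FL(1) finite_nat_bounded by blast
  show thesis
  proof (rule that[OF FL(3)])
    fix N a assume N: "Suc M \<le> N" and a: "t * sum c {..<N} - L \<le> a"
    define b where "b = t * sum c {..<N}"
    have "0 < sum c {..<N}" using N assms(3) by (intro sum_pos2[of _ 0]) (auto intro: less_imp_le)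
    then obtain \<delta> where "0 < \<delta>" and \<delta>: "\<And>a. b - \<delta> < a \<Longrightarrow> stake_expect p c {..<N} (at_least a) \<le> pi_fin p t"
      using stake_expect_at_least_le_pi_fin[of p c N t] assms(1-4) less_imp_le unfolding b_def by blast
    have "stake_expect p c {..<N} (at_least a)
        \<le> stake_expect p c {..<N} (\<lambda>y. at_least b y + of_bool (a \<le> y \<and> y < a + (b - a)))"
      using assms(1,2) by (intro stake_expect_mono) (auto simp: at_least_def)
    also have "\<dots> = stake_expect p c {..<N} (at_least b)
        + stake_expect p c {..<N} (\<lambda>y. of_bool (a \<le> y \<and> y < a + (b - a)))"
      by (rule stake_expect_add)
    also have "stake_expect p c {..<N} (at_least b) \<le> pi_fin p t"
      using \<delta> \<open>0 < \<delta>\<close> by simp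
    also have "stake_expect p c {..<N} (\<lambda>y. of_bool (a \<le> y \<and> y < a + (b - a))) \<le> m ^ card F"
      unfolding m_def using M N a assms(1,2) b_def
      by (intro stake_expect_window_le[OF _ _ FL(4)]) auto
    finally show "stake_expect p c {..<N} (at_least a) \<le> pi_fin p t + \<epsilon>"
      using k FL(2) by simp
  qed
qed

lemma prob_space_bern_space: "prob_space (bern_space p)"
  unfolding bern_space_def by (intro prob_space_PiM prob_space_measure_pmf)

lemma space_bern_space: "space (bern_space p) = UNIV"
  by (auto simp: bern_space_def space_PiM PiE_def extensional_def)

text \<open>The event is the disjoint union of the cylinders fixing the set of successes in \<open>A\<close>.\<close>
lemma bern_space_finite_sum_event:
  fixes s :: real and c :: "nat \<Rightarrow> real"
  assumes "finite A" "0 \<le> p" "p \<le> 1"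
  defines "E \<equiv> {\<omega> \<in> space (bern_space p). s \<le> (\<Sum>i\<in>A. c i * (if \<omega> i then 1 else 0))}"
  shows "E \<in> sets (bern_space p)" and "measure (bern_space p) E = stake_expect p c A (at_least s)"
proof -
  let ?M = "\<lambda>_::nat. measure_pmf (bernoulli_pmf p)"
  interpret product_prob_space ?M UNIV
    by (simp add: product_prob_space_def product_prob_space_axioms_def product_sigma_finite_def
        prob_space_measure_pmf prob_space_imp_sigma_finite)
  define X where "X B = prod_emb UNIV ?M A (PiE A (\<lambda>i. {i \<in> B}))" for B
  have X_sets: "X B \<in> sets (bern_space p)" for B
    unfolding X_def bern_space_def using assms(1) by (intro sets_PiM_I) auto
  have in_X: "\<omega> \<in> X B \<longleftrightarrow> (\<forall>i\<in>A. \<omega> i = (i \<in> B))" for \<omega> B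
    unfolding X_def prod_emb_iff by (auto simp: extensional_def PiE_iff)
  have sum_eq: "(\<Sum>i\<in>A. c i * (if \<omega> i then 1 else 0)) = sum c {i\<in>A. \<omega> i}" for \<omega>
    using assms(1) by (simp add: sum.inter_filter if_distrib cong: if_cong)
  define S where "S = {B \<in> Pow A. s \<le> sum c B}"
  have E: "E = (\<Union>B\<in>S. X B)"
  proof (intro set_eqI iffI)
    fix \<omega> assume "\<omega> \<in> E"
    then have "{i\<in>A. \<omega> i} \<in> S" "\<omega> \<in> X {i\<in>A. \<omega> i}" by (auto simp: E_def S_def in_X sum_eq)
    then show "\<omega> \<in> (\<Union>B\<in>S. X B)" by blast
  next
    fix \<omega> assume "\<omega> \<in> (\<Union>B\<in>S. X B)"
    then obtain B where B: "B \<in> S" "\<omega> \<in> X B" by blast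
    then have "{i\<in>A. \<omega> i} = B" by (auto simp: S_def in_X)
    then show "\<omega> \<in> E" using B by (simp add: E_def sum_eq space_bern_space S_def)
  qed
  have "finite S" using assms(1) by (simp add: S_def)
  then show "E \<in> sets (bern_space p)" unfolding E using X_sets by auto
  have "disjoint_family_on X S"
    unfolding disjoint_family_on_def by (auto simp: S_def in_X)
  have measure_X: "measure (bern_space p) (X B) = bern_weight p A B" for B
  proof -
    have "measure (bern_space p) (X B) = (\<Prod>i\<in>A. measure (?M i) {i \<in> B})"
      unfolding X_def bern_space_def using assms(1) by (intro measure_PiM_emb) auto
    also have "\<dots> = bern_weight p A B"
      unfolding bern_weight_def using assms(2,3) by (intro prod.cong refl) (auto simp: measure_pmf_single)
    finally show ?thesis .
  qed
  have "measure (bern_space p) (\<Union>B\<in>S. X B) = (\<Sum>B\<in>S. measure (bern_space p) (X B))"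
    using \<open>finite S\<close> X_sets \<open>disjoint_family_on X S\<close>
    by (intro measure_finite_Union) (auto simp: bern_space_def)
  also have "\<dots> = (\<Sum>B\<in>S. bern_weight p A B)" by (simp add: measure_X)
  also have "\<dots> = (\<Sum>B\<in>Pow A. if s \<le> sum c B then bern_weight p A B else 0)"
    unfolding S_def using assms(1) by (intro sum.inter_filter) simp
  also have "\<dots> = stake_expect p c A (at_least s)"
    unfolding stake_expect_def at_least_def by (intro sum.cong) auto
  finally show "measure (bern_space p) E = stake_expect p c A (at_least s)" unfolding E .
qed

lemma stake_seqD:
  assumes "stake_seq c"
  shows "summable c" "suminf c = 1" "0 \<le> c i" "sum c {..<M} \<le> 1" "c i \<le> 1"
proof -
  show c: "summable c" "suminf c = 1" and nonneg: "0 \<le> c i" for i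
    using assms by (auto simp: stake_seq_def sums_iff)
  show partial: "sum c {..<M} \<le> 1" for M
    using sum_le_suminf[of c "{..<M}"] c nonneg by auto
  show "c i \<le> 1"
    using member_le_sum[of i "{..<Suc i}" c] nonneg partial[of "Suc i"] by simp
qed

lemma stake_sum_finite:
  assumes "\<forall>i\<ge>n. c i = 0"
  shows "stake_sum c \<omega> = (\<Sum>i<n. c i * (if \<omega> i then 1 else 0))"
  unfolding stake_sum_def using assms by (intro suminf_finite) auto

lemma stake_sum_le_head:
  assumes "stake_seq c"
  shows "stake_sum c \<omega> \<le> (\<Sum>i<M. c i * (if \<omega> i then 1 else 0)) + (1 - sum c {..<M})"
proof -
  define f where "f i = c i * (if \<omega> i then 1 else (0::real))" for i
  have f: "f i \<le> c i" "0 \<le> f i" for i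
    using stake_seqD(3)[OF assms, of i] by (auto simp: f_def)
  have "summable f"
    by (rule summable_comparison_test'[OF stake_seqD(1)[OF assms], of 0]) (use f in auto)
  have "(\<Sum>j. f (j + M)) \<le> (\<Sum>j. c (j + M))"
    using f \<open>summable f\<close> stake_seqD(1)[OF assms] by (intro suminf_le) (auto simp: summable_iff_shift)
  moreover have "suminf f = (\<Sum>j. f (j + M)) + sum f {..<M}"
    by (rule suminf_split_initial_segment[OF \<open>summable f\<close>])
  moreover have "suminf c = (\<Sum>j. c (j + M)) + sum c {..<M}"
    by (rule suminf_split_initial_segment[OF stake_seqD(1)[OF assms]])
  ultimately show ?thesis
    using stake_seqD(2)[OF assms] unfolding stake_sum_def f_def[symmetric] by simp
qed

lemma measure_stake_sum_le_head:
  assumes "stake_seq c" "0 \<le> p" "p \<le> 1"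
  shows "measure (bern_space p) {\<omega> \<in> space (bern_space p). t \<le> stake_sum c \<omega>}
    \<le> stake_expect p c {..<M} (at_least (t - (1 - sum c {..<M})))"
proof -
  interpret prob_space "bern_space p" by (rule prob_space_bern_space)
  let ?E = "{\<omega> \<in> space (bern_space p).
    t - (1 - sum c {..<M}) \<le> (\<Sum>i\<in>{..<M}. c i * (if \<omega> i then 1 else 0))}"
  have sub: "{\<omega> \<in> space (bern_space p). t \<le> stake_sum c \<omega>} \<subseteq> ?E"
  proof
    fix \<omega> assume "\<omega> \<in> {\<omega> \<in> space (bern_space p). t \<le> stake_sum c \<omega>}"
    then show "\<omega> \<in> ?E" using stake_sum_le_head[OF assms(1), of \<omega> M] by auto
  qed
  note E = bern_space_finite_sum_event[where A="{..<M}" and s="t - (1 - sum c {..<M})" and c=c,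
      OF finite_lessThan assms(2,3)]
  show ?thesis
  proof (cases "{\<omega> \<in> space (bern_space p). t \<le> stake_sum c \<omega>} \<in> events")
    case True
    then show ?thesis using finite_measure_mono[OF sub E(1)] E(2) by simp
  next
    case False
    then show ?thesis
      using measure_notin_sets[OF False] assms(2,3) by (simp add: stake_expect_nonneg at_least_nonneg)
  qed
qed

lemma decseq_nonneg_cases:
  fixes c :: "nat \<Rightarrow> real"
  assumes "decseq c" "\<And>i. 0 \<le> c i"
  obtains (zero) "\<And>i. c i = 0" | (finite) n where "0 < sum c {..<n}" "\<forall>i\<ge>n. c i = 0"
    | (pos) "\<And>i. 0 < c i"
proof (cases "\<forall>i. 0 < c i")
  case False
  then obtain m where "\<not> 0 < c m" by blast
  then have "c i = 0" if "m \<le> i" for i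
    using decseqD[OF assms(1) that] assms(2)[of i] assms(2)[of m] by linarith
  then have tail: "\<forall>i\<ge>m. c i = 0" by blast
  show ?thesis
  proof (cases "sum c {..<m} = 0")
    case True
    then have "c i = 0" for i
      using tail assms(2) by (cases "i < m") (auto simp: sum_nonneg_eq_0_iff)
    then show ?thesis by (rule zero)
  next
    case False
    then have "0 < sum c {..<m}" using sum_nonneg[of "{..<m}" c] assms(2) by (simp add: less_le)
    then show ?thesis using finite tail by blast
  qed
qed (use pos in blast)

lemma stake_seq_tail_LIMSEQ:
  assumes "stake_seq c"
  shows "(\<lambda>M. 1 - sum c {..<M}) \<longlonglongrightarrow> 0"
proof -
  have "(\<lambda>M. 1 - sum c {..<M}) \<longlonglongrightarrow> 1 - suminf c"
    using summable_LIMSEQ[OF stake_seqD(1)[OF assms]] by (intro tendsto_intros)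
  then show ?thesis using stake_seqD(2)[OF assms] by simp
qed

text \<open>Truncate at a large \<open>M\<close>: the missing tail mass \<open>T\<close> lowers the threshold to \<open>t - T\<close>,
  which is within \<open>L\<close> of \<open>t\<close> times the head mass once \<open>T \<le> L\<close>.\<close>
lemma measure_stake_sum_le_pi_fin_add:
  assumes t: "0 < t" "t \<le> 1" and p: "0 < p" "p < 1" and c: "stake_seq c" "\<And>i. 0 < c i"
    and "0 < \<epsilon>"
  shows "measure (bern_space p) {\<omega> \<in> space (bern_space p). t \<le> stake_sum c \<omega>} \<le> pi_fin p t + \<epsilon>"
proof -
  define T where "T M = 1 - sum c {..<M}" for M
  have dec: "decseq c" using c(1) by (simp add: stake_seq_def)
  obtain L M0 where "0 < L" and window: "\<And>N a. M0 \<le> N \<Longrightarrow> t * sum c {..<N} - L \<le> a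
      \<Longrightarrow> stake_expect p c {..<N} (at_least a) \<le> pi_fin p t + \<epsilon>"
    using stake_expect_at_least_le_pi_fin_window[where c=c and t=t, OF p c(2) dec
        summable_LIMSEQ_zero[OF stake_seqD(1)[OF c(1)]] \<open>0 < \<epsilon>\<close>] by blast
  have "\<forall>\<^sub>F M in sequentially. T M < L \<and> M0 \<le> M"
    using order_tendstoD(2)[OF stake_seq_tail_LIMSEQ[OF c(1)] \<open>0 < L\<close>] eventually_ge_at_top[of M0]
    unfolding T_def by eventually_elim auto
  then obtain M where M: "T M < L" "M0 \<le> M" using eventually_sequentially by auto
  have "0 \<le> T M" using stake_seqD(4)[OF c(1)] by (simp add: T_def)
  then have "0 \<le> t * T M" using t by simp
  moreover have "t * sum c {..<M} = t - t * T M" by (simp add: T_def algebra_simps)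
  ultimately have "t * sum c {..<M} - L \<le> t - T M" using M(1) by linarith
  then show ?thesis
    using measure_stake_sum_le_head[OF c(1) less_imp_le[OF p(1)] less_imp_le[OF p(2)], of t M]
      window[OF M(2)] unfolding T_def by (meson order_trans)
qed

lemma measure_stake_sum_le_pi_fin:
  assumes t: "0 < t" "t \<le> 1" and p: "0 \<le> p" "p \<le> 1" and c: "stake_seq c"
  shows "measure (bern_space p) {\<omega> \<in> space (bern_space p). t \<le> stake_sum c \<omega>} \<le> pi_fin p t"
    (is "?m \<le> _")
proof -
  have "decseq c" "\<And>i. 0 \<le> c i" using c by (auto simp: stake_seq_def)
  then consider (finite) n where "\<forall>i\<ge>n. c i = 0" | (pos) "\<And>i. 0 < c i"
    by (cases rule: decseq_nonneg_cases) blast+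
  then show ?thesis
  proof cases
    case (finite n)
    have "?m = stake_expect p c {..<n} (at_least t)"
      using bern_space_finite_sum_event(2)[OF finite_lessThan p, of t c] stake_sum_finite[OF finite]
      by simp
    also have "\<dots> \<le> pi_fin p t" using p c finite by (rule stake_expect_le_pi_fin)
    finally show ?thesis .
  next
    case pos
    show ?thesis
    proof (rule field_le_epsilon)
      fix \<epsilon> :: real assume "0 < \<epsilon>"
      consider "p = 0" | "p = 1" | "0 < p" "p < 1" using p by linarith
      then show "?m \<le> pi_fin p t + \<epsilon>"
      proof cases
        case 1
        obtain M where M: "1 - sum c {..<M} < t"
          using order_tendstoD(2)[OF stake_seq_tail_LIMSEQ[OF c] t(1)] eventually_sequentially by auto
        have "?m \<le> stake_expect 0 c {..<M} (at_least (t - (1 - sum c {..<M})))"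
          using measure_stake_sum_le_head[OF c p] 1 by simp
        also have "\<dots> = 0" using M by (simp add: stake_expect_zero_prob at_least_def)
        finally show ?thesis using pi_fin_nonneg[OF p, of t] \<open>0 < \<epsilon>\<close> by simp
      next
        case 2
        interpret prob_space "bern_space p" by (rule prob_space_bern_space)
        show ?thesis using prob_le_1 pi_fin_one[OF t(2)] 2 \<open>0 < \<epsilon>\<close> by (smt (verit))
      next
        case 3
        then show ?thesis using measure_stake_sum_le_pi_fin_add[OF t 3 c pos \<open>0 < \<epsilon>\<close>] by simp
      qed
    qed
  qed
qed

lemma pi_fun_eq_pi_fin:
  assumes t: "0 < t" "t \<le> 1" and p: "0 \<le> p" "p \<le> 1"
  shows "pi_fun p t = pi_fin p t"
proof (rule antisym)
  interpret prob_space "bern_space p" by (rule prob_space_bern_space)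
  show "pi_fun p t \<le> pi_fin p t"
    unfolding pi_fun_def using stake_seq_unit measure_stake_sum_le_pi_fin[OF t p]
    by (intro cSup_least) auto
  show "pi_fin p t \<le> pi_fun p t"
  proof (rule pi_fin_le)
    fix c n assume c: "stake_seq c" "\<forall>i\<ge>n. c i = 0"
    have "stake_expect p c {..<n} (at_least t)
        = measure (bern_space p) {\<omega> \<in> space (bern_space p). t \<le> stake_sum c \<omega>}"
      using bern_space_finite_sum_event(2)[OF finite_lessThan p, of t c] stake_sum_finite[OF c(2)] by simp
    also have "\<dots> \<le> pi_fun p t"
      unfolding pi_fun_def using c(1) by (intro cSup_upper) (auto intro: bdd_aboveI[of _ 1])
    finally show "stake_expect p c {..<n} (at_least t) \<le> pi_fun p t" .
  qed
qed

section \<open>Semicontinuity\<close>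

lemma pi_fin_lower_semicontinuous:
  assumes "S \<subseteq> {0..1}" "a < pi_fin p t"
  shows "\<forall>\<^sub>F q in at p within S. a < pi_fin q t"
proof -
  obtain c n where c: "stake_seq c" "\<forall>i\<ge>n. c i = 0" and a: "a < stake_expect p c {..<n} (at_least t)"
    using less_pi_fin_obtains[OF assms(2)] .
  have "((\<lambda>q. stake_expect q c {..<n} (at_least t)) \<longlongrightarrow> stake_expect p c {..<n} (at_least t)) (at p within S)"
    using isCont_stake_expect by (rule isCont_tendsto_compose[OF _ tendsto_ident_at])
  then have "\<forall>\<^sub>F q in at p within S. a < stake_expect q c {..<n} (at_least t)"
    using a by (rule order_tendstoD)
  moreover have "\<forall>\<^sub>F q in at p within S. q \<in> S" by (simp add: eventually_at_filter)
  ultimately show ?thesis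
  proof eventually_elim
    case (elim q)
    then show ?case using assms(1) stake_expect_le_pi_fin[OF _ _ c, of q t] by fastforce
  qed
qed

lemma bounded_seq_pointwise_convergent_subseq:
  fixes \<gamma> :: "nat \<Rightarrow> nat \<Rightarrow> real"
  assumes "\<And>k i. \<gamma> k i \<in> {a..b}"
  obtains r c where "strict_mono r" "\<And>i. (\<lambda>k. \<gamma> (r k) i) \<longlonglongrightarrow> c i"
proof -
  have "compact (PiE UNIV (\<lambda>_::nat. {a..b}))"
    using compactin_PiE[of "\<lambda>_. euclidean" UNIV "\<lambda>_. {a..b}"]
    by (simp add: euclidean_product_topology compactin_euclidean_iff)
  moreover have "\<gamma> k \<in> PiE UNIV (\<lambda>_. {a..b})" for k
    using assms by (simp add: PiE_UNIV_domain)
  ultimately obtain c r where r: "strict_mono r" and lim: "(\<gamma> \<circ> r) \<longlonglongrightarrow> c"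
    by (metis compact_imp_seq_compact seq_compactE)
  have "isCont (\<lambda>x. x i) c" for i :: nat
    using continuous_on_product_coordinates[of i] by (metis continuous_on_eq_continuous_at open_UNIV UNIV_I)
  then have "(\<lambda>k. (\<gamma> \<circ> r) k i) \<longlonglongrightarrow> c i" for i
    using isCont_tendsto_compose[OF _ lim] by blast
  then show ?thesis using that[OF r, of c] by (simp add: comp_def)
qed

lemma stake_expect_chebyshev:
  assumes "finite A" "0 \<le> q" "q \<le> 1" "0 < \<eta>"
  shows "stake_expect q c A (at_least (q * sum c A + \<eta>)) \<le> q * (1 - q) * (\<Sum>i\<in>A. (c i)\<^sup>2) / \<eta>\<^sup>2"
proof -
  have "at_least (q * sum c A + \<eta>) y \<le> (1 / \<eta>\<^sup>2) * (y + - (q * sum c A))\<^sup>2" for y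
  proof (cases "q * sum c A + \<eta> \<le> y")
    case True
    then have "\<eta>\<^sup>2 \<le> (y + - (q * sum c A))\<^sup>2" using assms(4) by (intro power_mono) auto
    then show ?thesis using True assms(4) by (simp add: at_least_def field_simps)
  qed (simp add: at_least_def)
  then have "stake_expect q c A (at_least (q * sum c A + \<eta>))
      \<le> stake_expect q c A (\<lambda>y. (1 / \<eta>\<^sup>2) * (y + - (q * sum c A))\<^sup>2)"
    using assms(2,3) by (intro stake_expect_mono) auto
  also have "\<dots> = q * (1 - q) * (\<Sum>i\<in>A. (c i)\<^sup>2) / \<eta>\<^sup>2"
    by (simp only: stake_expect_cmult stake_expect_square[OF assms(1)]) simp
  finally show ?thesis .
qed

text \<open>Splitting the stake sum at \<open>N\<close>: the tail has mean \<open>q\<close> times its mass and, the stakes being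
  non-increasing, variance at most \<open>\<gamma> N\<close>.\<close>
lemma stake_expect_at_least_le_head:
  assumes "0 \<le> q" "q \<le> 1" "stake_seq \<gamma>" "\<forall>i\<ge>n. \<gamma> i = 0" "0 < \<eta>"
  shows "stake_expect q \<gamma> {..<n} (at_least t)
    \<le> stake_expect q \<gamma> {..<N} (at_least (t - q * (1 - sum \<gamma> {..<N}) - \<eta>)) + \<gamma> N / \<eta>\<^sup>2"
proof -
  define n' where "n' = max n N"
  define \<mu> where "\<mu> = q * (1 - sum \<gamma> {..<N})"
  have splits: "{..<n'} = {..<n} \<union> {n..<n'}" "{..<n'} = {..<N} \<union> {N..<n'}"
    by (auto simp: n'_def)
  have "\<gamma> sums sum \<gamma> {..<n'}" using assms(4) by (intro sums_finite) (auto simp: n'_def)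
  then have "sum \<gamma> {..<n'} = 1" using assms(3) sums_unique2 by (auto simp: stake_seq_def)
  then have tail: "sum \<gamma> {N..<n'} = 1 - sum \<gamma> {..<N}"
    unfolding splits(2) by (subst (asm) sum.union_disjoint) auto
  have "stake_expect q \<gamma> {..<n} (at_least t) = stake_expect q \<gamma> {..<n'} (at_least t)"
    unfolding splits(1) using assms(4) by (intro stake_expect_union_null[symmetric]) auto
  also have "\<dots> \<le> stake_expect q \<gamma> {..<N} (at_least (t - \<mu> - \<eta>))
      + stake_expect q \<gamma> {N..<n'} (at_least (q * sum \<gamma> {N..<n'} + \<eta>))"
    unfolding splits(2) tail using assms(1,2) by (intro stake_expect_union_le) (auto simp: at_least_def \<mu>_def)
  also have "stake_expect q \<gamma> {N..<n'} (at_least (q * sum \<gamma> {N..<n'} + \<eta>))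
      \<le> q * (1 - q) * (\<Sum>i\<in>{N..<n'}. (\<gamma> i)\<^sup>2) / \<eta>\<^sup>2"
    using assms(1,2,5) by (intro stake_expect_chebyshev) auto
  also have "q * (1 - q) * (\<Sum>i\<in>{N..<n'}. (\<gamma> i)\<^sup>2) \<le> 1 * (\<Sum>i\<in>{N..<n'}. \<gamma> N * \<gamma> i)"
  proof (intro mult_mono sum_mono)
    fix i assume "i \<in> {N..<n'}"
    then have "\<gamma> i \<le> \<gamma> N" using assms(3) by (auto simp: stake_seq_def decseq_def)
    then show "(\<gamma> i)\<^sup>2 \<le> \<gamma> N * \<gamma> i"
      using stake_seqD(3)[OF assms(3), of i] by (simp add: power2_eq_square mult_right_mono)
  qed (use assms(1,2) in \<open>auto simp: mult_le_one sum_nonneg\<close>)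
  also have "(\<Sum>i\<in>{N..<n'}. \<gamma> N * \<gamma> i) \<le> \<gamma> N"
    using tail stake_seqD(3,4)[OF assms(3)] sum_nonneg[of "{..<N}" \<gamma>]
    by (simp add: sum_distrib_left[symmetric] mult_left_le)
  finally show ?thesis
    using assms(5) by (simp add: \<mu>_def divide_right_mono)
qed

text \<open>Here \<open>c\<close> is a pointwise limit of stake sequences and may have lost mass; the slack
  \<open>(t - p) * (1 - sum c {..<N})\<close> in the threshold is where \<open>p < t\<close> is used.\<close>
lemma limit_stake_head_bound:
  assumes p: "0 \<le> p" "p < t" and t: "t \<le> 1"
    and c: "\<And>i. 0 \<le> c i" "decseq c" "\<And>N. sum c {..<N} \<le> 1" and "0 < \<epsilon>"
  obtains N \<eta> where "0 < \<eta>" "c N < \<epsilon> * \<eta>\<^sup>2"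
    "stake_expect p c {..<N} (at_least (t - p * (1 - sum c {..<N}) - 2 * \<eta>)) \<le> pi_fin p t + \<epsilon>"
proof -
  have "summable c" using c(1,3) by (intro summableI_nonneg_bounded)
  then have c_lim: "c \<longlonglongrightarrow> 0" by (rule summable_LIMSEQ_zero)
  have small: "\<forall>\<^sub>F N in sequentially. c N < \<epsilon> * \<eta>\<^sup>2" if "0 < \<eta>" for \<eta>
    using c_lim that \<open>0 < \<epsilon>\<close> by (intro order_tendstoD) auto
  have slack: "t * sum c {..<N} - 2 * \<eta> \<le> t - p * (1 - sum c {..<N}) - 2 * \<eta>" for N \<eta>
    using mult_right_mono[OF less_imp_le[OF p(2)], of "1 - sum c {..<N}"] c(3)[of N]
    by (simp add: algebra_simps)
  have "p = 0 \<or> (\<forall>i. c i = 0) \<or> (\<exists>n. 0 < sum c {..<n} \<and> (\<forall>i\<ge>n. c i = 0))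
      \<or> (0 < p \<and> (\<forall>i. 0 < c i))"
    by (cases rule: decseq_nonneg_cases[OF c(2,1)]) (use p(1) in auto)
  then consider (degenerate) "p = 0 \<or> (\<forall>i. c i = 0)"
    | (finite) n where "0 < sum c {..<n}" "\<forall>i\<ge>n. c i = 0"
    | (pos) "0 < p" "\<And>i. 0 < c i"
    by blast
  then show thesis
  proof cases
    case degenerate
    define \<eta> where "\<eta> = (t - p) / 4"
    have "0 < \<eta>" using p by (simp add: \<eta>_def)
    then obtain N where N: "c N < \<epsilon> * \<eta>\<^sup>2" using small[OF \<open>0 < \<eta>\<close>] eventually_sequentially by auto
    have "stake_expect p c {..<N} g = g 0" for g
      using degenerate stake_expect_zero_prob[of "{..<N}" c g] stake_expect_null[of "{..<N}" c p g] by auto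
    moreover have "0 < t - p * (1 - sum c {..<N}) - 2 * \<eta>"
      using slack[of N \<eta>] degenerate p by (auto simp: \<eta>_def)
    ultimately have "stake_expect p c {..<N} (at_least (t - p * (1 - sum c {..<N}) - 2 * \<eta>)) = 0"
      by (simp add: at_least_def)
    then show thesis
      using that[OF \<open>0 < \<eta>\<close> N] pi_fin_nonneg[of p t] p t \<open>0 < \<epsilon>\<close> by simp
  next
    case (finite n)
    obtain \<delta> where "0 < \<delta>" and \<delta>: "\<And>a. t * sum c {..<n} - \<delta> < a
        \<Longrightarrow> stake_expect p c {..<n} (at_least a) \<le> pi_fin p t"
      using stake_expect_at_least_le_pi_fin[of p c n t] p t c(1,2) finite(1) by auto
    have "0 < \<delta> / 4" "c n < \<epsilon> * (\<delta> / 4)\<^sup>2"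
      using \<open>0 < \<delta>\<close> \<open>0 < \<epsilon>\<close> finite(2) by auto
    moreover have "stake_expect p c {..<n} (at_least (t - p * (1 - sum c {..<n}) - 2 * (\<delta> / 4)))
        \<le> pi_fin p t + \<epsilon>"
    proof -
      have "t * sum c {..<n} - \<delta> < t - p * (1 - sum c {..<n}) - 2 * (\<delta> / 4)"
        using slack[of n "\<delta> / 4"] \<open>0 < \<delta>\<close> by linarith
      then show ?thesis using \<delta> \<open>0 < \<epsilon>\<close> by fastforce
    qed
    ultimately show thesis by (rule that)
  next
    case pos
    obtain L M where "0 < L" and window: "\<And>N a. M \<le> N \<Longrightarrow> t * sum c {..<N} - L \<le> a
        \<Longrightarrow> stake_expect p c {..<N} (at_least a) \<le> pi_fin p t + \<epsilon>"
      using stake_expect_at_least_le_pi_fin_window[where c=c and t=t, OF pos(1) _ pos(2) c(2) c_lim \<open>0 < \<epsilon>\<close>]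
        p t by auto
    have "0 < L / 2" using \<open>0 < L\<close> by simp
    have "\<forall>\<^sub>F N in sequentially. c N < \<epsilon> * (L / 2)\<^sup>2 \<and> M \<le> N"
      using small[OF \<open>0 < L / 2\<close>] eventually_ge_at_top[of M] by eventually_elim auto
    then obtain N where N: "c N < \<epsilon> * (L / 2)\<^sup>2" "M \<le> N" using eventually_sequentially by auto
    show thesis
      using that[of "L / 2" N] \<open>0 < L\<close> N window[OF N(2)] slack[of N "L / 2"] by simp
  qed
qed

lemma stake_expect_eventually_less_pi_fin:
  assumes p: "0 \<le> p" "p < t" and t: "t \<le> 1"
    and q: "q \<longlonglongrightarrow> p" "\<And>k. 0 \<le> q k" "\<And>k. q k \<le> 1"
    and \<gamma>: "\<And>k. stake_seq (\<gamma> k)" "\<And>k. \<forall>i\<ge>n k. \<gamma> k i = 0"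
    and lim: "\<And>i. (\<lambda>k. \<gamma> k i) \<longlonglongrightarrow> c i" and "0 < \<epsilon>"
  shows "\<forall>\<^sub>F k in sequentially. stake_expect (q k) (\<gamma> k) {..<n k} (at_least t) < pi_fin p t + \<epsilon>"
proof -
  have c_nonneg: "0 \<le> c i" for i
    using lim[of i] stake_seqD(3)[OF \<gamma>(1)] by (intro LIMSEQ_le_const) auto
  have c_dec: "decseq c"
    unfolding decseq_def
  proof (intro allI impI)
    fix i j :: nat assume "i \<le> j"
    then show "c j \<le> c i"
      using lim[of i] lim[of j] \<gamma>(1) by (intro LIMSEQ_le) (auto simp: stake_seq_def decseq_def)
  qed
  have c_sum: "sum c {..<N} \<le> 1" for N
  proof -
    have "(\<lambda>k. sum (\<gamma> k) {..<N}) \<longlonglongrightarrow> sum c {..<N}" by (intro tendsto_sum lim)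
    then show ?thesis using stake_seqD(4)[OF \<gamma>(1)] by (intro LIMSEQ_le_const2) auto
  qed
  have "0 < \<epsilon> / 3" using \<open>0 < \<epsilon>\<close> by simp
  then obtain N \<eta> where "0 < \<eta>" and N: "c N < \<epsilon> / 3 * \<eta>\<^sup>2"
    and head: "stake_expect p c {..<N} (at_least (t - p * (1 - sum c {..<N}) - 2 * \<eta>)) \<le> pi_fin p t + \<epsilon> / 3"
    by (rule limit_stake_head_bound[OF p t c_nonneg c_dec c_sum])
  define \<mu> where "\<mu> k = q k * (1 - sum (\<gamma> k) {..<N})" for k
  have "(\<lambda>k. t - \<mu> k - \<eta>) \<longlonglongrightarrow> t - p * (1 - sum c {..<N}) - \<eta>"
    unfolding \<mu>_def by (intro tendsto_intros q lim)
  then have "\<forall>\<^sub>F k in sequentially. stake_expect (q k) (\<gamma> k) {..<N} (at_least (t - \<mu> k - \<eta>))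
      \<le> stake_expect p c {..<N} (at_least (t - p * (1 - sum c {..<N}) - \<eta> - \<eta>)) + \<epsilon> / 3"
    using \<open>0 < \<eta>\<close> \<open>0 < \<epsilon>\<close> by (intro stake_expect_at_least_limsup[OF _ q lim]) auto
  moreover have "(\<lambda>k. \<gamma> k N / \<eta>\<^sup>2) \<longlonglongrightarrow> c N / \<eta>\<^sup>2"
    using \<open>0 < \<eta>\<close> by (intro tendsto_intros lim) simp
  then have "\<forall>\<^sub>F k in sequentially. \<gamma> k N / \<eta>\<^sup>2 < \<epsilon> / 3"
    using N \<open>0 < \<eta>\<close> by (intro order_tendstoD) (auto simp: field_simps)
  ultimately show ?thesis
  proof eventually_elim
    case (elim k)
    have "stake_expect (q k) (\<gamma> k) {..<n k} (at_least t)
        \<le> stake_expect (q k) (\<gamma> k) {..<N} (at_least (t - \<mu> k - \<eta>)) + \<gamma> k N / \<eta>\<^sup>2"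
      unfolding \<mu>_def using q(2,3) \<gamma> \<open>0 < \<eta>\<close> by (rule stake_expect_at_least_le_head)
    then show ?case using elim head by (simp add: algebra_simps)
  qed
qed

lemma pi_fin_eventually_less:
  assumes p: "0 \<le> p" "p < t" and t: "t \<le> 1"
    and q: "q \<longlonglongrightarrow> p" "\<And>k. 0 \<le> q k" "\<And>k. q k \<le> 1" and "0 < \<epsilon>"
  shows "\<forall>\<^sub>F k in sequentially. pi_fin (q k) t < pi_fin p t + \<epsilon>"
proof (rule ccontr)
  assume "\<not> ?thesis"
  then have "infinite {k. pi_fin p t + \<epsilon> \<le> pi_fin (q k) t}"
    by (simp add: not_eventually not_less frequently_cofinite[symmetric] cofinite_eq_sequentially)
  then obtain r :: "nat \<Rightarrow> nat" where r: "strict_mono r" "\<And>k. pi_fin p t + \<epsilon> \<le> pi_fin (q (r k)) t"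
    using infinite_enumerate by blast
  have "\<exists>c n. stake_seq c \<and> (\<forall>i\<ge>n. c i = 0)
      \<and> pi_fin p t + \<epsilon> / 2 < stake_expect (q (r k)) c {..<n} (at_least t)" for k
  proof -
    have "pi_fin p t + \<epsilon> / 2 < pi_fin (q (r k)) t" using r(2)[of k] \<open>0 < \<epsilon>\<close> by linarith
    then obtain c n where "stake_seq c" "\<forall>i\<ge>n. c i = 0"
      "pi_fin p t + \<epsilon> / 2 < stake_expect (q (r k)) c {..<n} (at_least t)"
      by (rule less_pi_fin_obtains)
    then show ?thesis by blast
  qed
  then obtain \<gamma> n where \<gamma>: "\<And>k. stake_seq (\<gamma> k)" "\<And>k. \<forall>i\<ge>n k. \<gamma> k i = 0"
    and big: "\<And>k. pi_fin p t + \<epsilon> / 2 < stake_expect (q (r k)) (\<gamma> k) {..<n k} (at_least t)"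
    by (metis (no_types))
  obtain r' c where r': "strict_mono r'" and lim: "\<And>i. (\<lambda>k. \<gamma> (r' k) i) \<longlonglongrightarrow> c i"
    using bounded_seq_pointwise_convergent_subseq[of \<gamma> 0 1] stake_seqD(3,5)[OF \<gamma>(1)] by auto
  have "(\<lambda>k. q (r (r' k))) \<longlonglongrightarrow> p"
    using LIMSEQ_subseq_LIMSEQ[OF LIMSEQ_subseq_LIMSEQ[OF q(1) r(1)] r'] by (simp add: comp_def)
  then have "\<forall>\<^sub>F k in sequentially.
      stake_expect (q (r (r' k))) (\<gamma> (r' k)) {..<n (r' k)} (at_least t) < pi_fin p t + \<epsilon> / 2"
    using \<open>0 < \<epsilon>\<close> q(2,3) by (intro stake_expect_eventually_less_pi_fin[OF p t _ _ _ \<gamma> lim]) simp_all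
  then obtain k where "stake_expect (q (r (r' k))) (\<gamma> (r' k)) {..<n (r' k)} (at_least t) < pi_fin p t + \<epsilon> / 2"
    by (auto simp: eventually_sequentially)
  with big[of "r' k"] show False by simp
qed

lemma pi_fin_upper_semicontinuous:
  assumes t: "0 < t" "t \<le> 1" and p: "p \<in> {0..t}" and "pi_fin p t < a"
  shows "\<forall>\<^sub>F q in at p within {0..t}. pi_fin q t < a"
proof (cases "p = t")
  case True
  have "\<forall>\<^sub>F q in at p within {0..t}. q \<in> {0..t}" by (simp add: eventually_at_filter)
  then show ?thesis
  proof eventually_elim
    case (elim q)
    then have "pi_fin q t \<le> pi_fin p t" using True t by (intro pi_fin_mono) auto
    then show ?case using \<open>pi_fin p t < a\<close> by simp
  qed
next
  case False
  show ?thesis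
  proof (rule sequentially_imp_eventually_within, intro allI impI)
    fix f assume f: "(\<forall>k. f k \<in> {0..t} \<and> f k \<noteq> p) \<and> f \<longlonglongrightarrow> p"
    then have "f k \<in> {0..t}" for k by blast
    then have "0 \<le> f k" "f k \<le> 1" for k using t(2) by (auto dest: order_trans)
    then have "\<forall>\<^sub>F k in sequentially. pi_fin (f k) t < pi_fin p t + (a - pi_fin p t)"
      using f False p t \<open>pi_fin p t < a\<close> by (intro pi_fin_eventually_less) auto
    then show "\<forall>\<^sub>F k in sequentially. pi_fin (f k) t < a" by simp
  qed
qed

theorem theorem8:
  fixes t :: real
  assumes "0 < t" and "t \<le> 1"
  shows "continuous_on {0..t} (\<lambda>p. pi_fun p t)"
proof -
  have "continuous_on {0..t} (\<lambda>p. pi_fin p t)"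
    unfolding continuous_on_def
  proof
    fix p assume p: "p \<in> {0..t}"
    show "((\<lambda>p. pi_fin p t) \<longlongrightarrow> pi_fin p t) (at p within {0..t})"
    proof (rule order_tendstoI)
      fix a assume "a < pi_fin p t"
      then show "\<forall>\<^sub>F q in at p within {0..t}. a < pi_fin q t"
        using assms by (intro pi_fin_lower_semicontinuous) auto
    qed (rule pi_fin_upper_semicontinuous[OF assms p])
  qed
  moreover have "pi_fun p t = pi_fin p t" if "p \<in> {0..t}" for p
    using that assms by (intro pi_fun_eq_pi_fin) auto
  ultimately show ?thesis
    using continuous_on_cong[of "{0..t}" "{0..t}" "\<lambda>p. pi_fun p t" "\<lambda>p. pi_fin p t"] by simp
qed
end
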